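(* If $f\colon Z\to X$ is a max-min Milyutin map of compact Hausdorff spaces, then $J(f)\colon J(Z)\to J(X)$ is surjective.
   Context: A max-min measure on a compact Hausdorff space $X$ is a functional $\mu\colon C(X)\to\mathbb R$ (not assumed continuous) such that $\mu(c_X)=c$ for constants $c$, $\mu(\varphi\vee\psi)=\mu(\varphi)\vee\mu(\psi)$, and $\mu(c\wedge\varphi)=c\wedge\mu(\varphi)$ for $c\in\mathbb R$. $J(X)$ is the set of max-min measures with the topology of pointwise convergence on $C(X)$; for continuous $f\colon X\to Y$, $J(f)(\mu)(\varphi)=\mu(\varphi\circ f)$. For a closed subset $A\subset X$, $J(A)$ is identified with $J(i)(J(A))\subset J(X)$, $i\colon A\to X$ the inclusion. A continuous surjection $f\colon Z\to X$ is a max-min Milyutin map if there is a continuous $s\colon X\to J(Z)$ with $s(x)\in J(f^{-1}(x))$ for every $x\in X$. *)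

theory Defs
  imports "HOL-Analysis.Analysis"
begin

text \<open>C(X): continuous real functions on the space X, made extensional
  (value undefined outside topspace X), so that functions are identified
  exactly when they agree on X.\<close>
definition Cfun :: "'a topology \<Rightarrow> ('a \<Rightarrow> real) set" where
  "Cfun X = {\<phi>. continuous_map X euclideanreal \<phi> \<and> \<phi> \<in> extensional (topspace X)}"

definition const_fun :: "'a topology \<Rightarrow> real \<Rightarrow> ('a \<Rightarrow> real)" where
  "const_fun X c = restrict (\<lambda>_. c) (topspace X)"

definition max_fun :: "'a topology \<Rightarrow> ('a \<Rightarrow> real) \<Rightarrow> ('a \<Rightarrow> real) \<Rightarrow> ('a \<Rightarrow> real)" where
  "max_fun X \<phi> \<psi> = restrict (\<lambda>x. max (\<phi> x) (\<psi> x)) (topspace X)"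

definition min_const :: "'a topology \<Rightarrow> real \<Rightarrow> ('a \<Rightarrow> real) \<Rightarrow> ('a \<Rightarrow> real)" where
  "min_const X c \<phi> = restrict (\<lambda>x. min c (\<phi> x)) (topspace X)"

text \<open>Max-min measures on X (functionals on C(X), not assumed continuous),
  made extensional on C(X) so that they are points of the product space R^{C(X)}.\<close>
definition maxmin_measures :: "'a topology \<Rightarrow> (('a \<Rightarrow> real) \<Rightarrow> real) set" where
  "maxmin_measures X = {\<mu>. \<mu> \<in> extensional (Cfun X)
     \<and> (\<forall>c. \<mu> (const_fun X c) = c)
     \<and> (\<forall>\<phi>\<in>Cfun X. \<forall>\<psi>\<in>Cfun X. \<mu> (max_fun X \<phi> \<psi>) = max (\<mu> \<phi>) (\<mu> \<psi>))
     \<and> (\<forall>c. \<forall>\<phi>\<in>Cfun X. \<mu> (min_const X c \<phi>) = min c (\<mu> \<phi>))}"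

definition Jtop :: "'a topology \<Rightarrow> (('a \<Rightarrow> real) \<Rightarrow> real) topology" where
  "Jtop X = subtopology (product_topology (\<lambda>_. euclideanreal) (Cfun X)) (maxmin_measures X)"

definition Jmap :: "'a topology \<Rightarrow> 'b topology \<Rightarrow> ('a \<Rightarrow> 'b)
    \<Rightarrow> (('a \<Rightarrow> real) \<Rightarrow> real) \<Rightarrow> (('b \<Rightarrow> real) \<Rightarrow> real)" where
  "Jmap X Y f \<mu> = restrict (\<lambda>\<phi>. \<mu> (restrict (\<phi> \<circ> f) (topspace X))) (Cfun Y)"

text \<open>J(A) for a closed A \<subseteq> X, identified with J(i)(J(A)) \<subseteq> J(X).\<close>
definition J_sub :: "'a topology \<Rightarrow> 'a set \<Rightarrow> (('a \<Rightarrow> real) \<Rightarrow> real) set" where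
  "J_sub X A = Jmap (subtopology X A) X id ` maxmin_measures (subtopology X A)"

definition maxmin_Milyutin :: "'a topology \<Rightarrow> 'b topology \<Rightarrow> ('a \<Rightarrow> 'b) \<Rightarrow> bool" where
  "maxmin_Milyutin Z X f \<longleftrightarrow> continuous_map Z X f \<and> f ` topspace Z = topspace X \<and>
     (\<exists>s. continuous_map X (Jtop Z) s \<and>
          (\<forall>x\<in>topspace X. s x \<in> J_sub Z {z \<in> topspace Z. f z = x}))"

end

theory Submission
  imports Defs
begin

text \<open>J(f) maps J(Z) into J(X) because precomposition with f commutes with constants, max and
  min. Conversely, a Milyutin section s lets one lift \<nu> \<in> J(X) to the average
  \<mu>(\<phi>) = \<nu>(x \<mapsto> s(x)(\<phi>)), which is again a max-min measure because s is continuous in the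
  pointwise topology. Since s(x) lives on the fibre over x, where \<phi> \<circ> f is the constant \<phi>(x),
  we get s(x)(\<phi> \<circ> f) = \<phi>(x) and hence J(f)(\<mu>) = \<nu>.\<close>

lemma Cfun_restrict:
  assumes "continuous_map X euclideanreal g"
  shows "restrict g (topspace X) \<in> Cfun X"
  unfolding Cfun_def using assms by (auto intro: continuous_map_eq[OF assms])

lemma Cfun_continuous_map: "\<phi> \<in> Cfun X \<Longrightarrow> continuous_map X euclideanreal \<phi>"
  by (simp add: Cfun_def)

lemma Cfun_restrict_eq: "\<phi> \<in> Cfun X \<Longrightarrow> restrict \<phi> (topspace X) = \<phi>"
  by (simp add: Cfun_def extensional_restrict)

lemma Cfun_comp:
  assumes "\<phi> \<in> Cfun X" "continuous_map Z X f"
  shows "restrict (\<phi> \<circ> f) (topspace Z) \<in> Cfun Z"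
  by (rule Cfun_restrict) (meson assms Cfun_continuous_map continuous_map_compose)

lemma const_fun_Cfun: "const_fun X c \<in> Cfun X"
  unfolding const_fun_def by (rule Cfun_restrict) simp

lemma max_fun_Cfun: "\<phi> \<in> Cfun X \<Longrightarrow> \<psi> \<in> Cfun X \<Longrightarrow> max_fun X \<phi> \<psi> \<in> Cfun X"
  unfolding max_fun_def
  by (rule Cfun_restrict) (intro continuous_map_real_max Cfun_continuous_map)

lemma min_const_Cfun: "\<phi> \<in> Cfun X \<Longrightarrow> min_const X c \<phi> \<in> Cfun X"
  unfolding min_const_def
  by (rule Cfun_restrict) (auto intro: continuous_map_real_min Cfun_continuous_map)

lemma maxmin_measuresD:
  assumes "\<mu> \<in> maxmin_measures X"
  shows "\<mu> \<in> extensional (Cfun X)"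
    and "\<mu> (const_fun X c) = c"
    and "\<phi> \<in> Cfun X \<Longrightarrow> \<psi> \<in> Cfun X \<Longrightarrow> \<mu> (max_fun X \<phi> \<psi>) = max (\<mu> \<phi>) (\<mu> \<psi>)"
    and "\<phi> \<in> Cfun X \<Longrightarrow> \<mu> (min_const X c \<phi>) = min c (\<mu> \<phi>)"
  using assms by (auto simp: maxmin_measures_def)

lemma Jmap_in_maxmin_measures:
  assumes f: "continuous_map Z X f" and \<mu>: "\<mu> \<in> maxmin_measures Z"
  shows "Jmap Z X f \<mu> \<in> maxmin_measures X"
proof -
  let ?p = "\<lambda>\<phi>. restrict (\<phi> \<circ> f) (topspace Z)"
  have fZ: "f z \<in> topspace X" if "z \<in> topspace Z" for z
    using continuous_map_image_subset_topspace[OF f] that by blast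
  have Jmap_eq: "Jmap Z X f \<mu> \<phi> = \<mu> (?p \<phi>)" if "\<phi> \<in> Cfun X" for \<phi>
    using that by (simp add: Jmap_def)
  have "?p (const_fun X c) = const_fun Z c" for c
    by (auto simp: const_fun_def fZ)
  moreover have "?p (max_fun X \<phi> \<psi>) = max_fun Z (?p \<phi>) (?p \<psi>)" for \<phi> \<psi>
    by (auto simp: max_fun_def fZ)
  moreover have "?p (min_const X c \<phi>) = min_const Z c (?p \<phi>)" for c \<phi>
    by (auto simp: min_const_def fZ)
  ultimately show ?thesis
    using maxmin_measuresD[OF \<mu>] Cfun_comp[OF _ f]
    by (simp add: maxmin_measures_def Jmap_eq const_fun_Cfun max_fun_Cfun min_const_Cfun)
       (simp add: Jmap_def)
qed

lemma J_sub_const_on: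
  assumes "\<mu> \<in> J_sub Z A" "\<psi> \<in> Cfun Z" "\<And>z. z \<in> topspace Z \<Longrightarrow> z \<in> A \<Longrightarrow> \<psi> z = c"
  shows "\<mu> \<psi> = c"
proof -
  obtain \<rho> where \<rho>: "\<rho> \<in> maxmin_measures (subtopology Z A)"
    and \<mu>_eq: "\<mu> = Jmap (subtopology Z A) Z id \<rho>"
    using assms(1) by (auto simp: J_sub_def)
  have "restrict (\<psi> \<circ> id) (topspace (subtopology Z A)) = const_fun (subtopology Z A) c"
    using assms(3) by (auto simp: const_fun_def)
  then show ?thesis
    using assms(2) maxmin_measuresD(2)[OF \<rho>] by (simp add: \<mu>_eq Jmap_def)
qed

text \<open>The average of a family s of measures on Z against a measure \<nu> on X, i.e. the monad
  multiplication of J applied to J(s)(\<nu>).\<close>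
definition maxmin_average ::
    "'b topology \<Rightarrow> 'a topology \<Rightarrow> ('b \<Rightarrow> ('a \<Rightarrow> real) \<Rightarrow> real)
      \<Rightarrow> (('b \<Rightarrow> real) \<Rightarrow> real) \<Rightarrow> ('a \<Rightarrow> real) \<Rightarrow> real" where
  "maxmin_average X Z s \<nu> = restrict (\<lambda>\<phi>. \<nu> (restrict (\<lambda>x. s x \<phi>) (topspace X))) (Cfun Z)"

lemma maxmin_average_in_maxmin_measures:
  assumes s: "continuous_map X (Jtop Z) s" and \<nu>: "\<nu> \<in> maxmin_measures X"
  shows "maxmin_average X Z s \<nu> \<in> maxmin_measures Z"
proof -
  let ?g = "\<lambda>\<phi>. restrict (\<lambda>x. s x \<phi>) (topspace X)"
  have sM: "s x \<in> maxmin_measures Z" if "x \<in> topspace X" for x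
    using s that unfolding continuous_map_def Jtop_def by auto
  have "continuous_map X (product_topology (\<lambda>_. euclideanreal) (Cfun Z)) s"
    using s unfolding Jtop_def by (simp add: continuous_map_in_subtopology)
  then have "continuous_map X euclideanreal (\<lambda>x. s x \<phi>)" if "\<phi> \<in> Cfun Z" for \<phi>
    using that by (auto simp: continuous_map_componentwise)
  then have gC: "?g \<phi> \<in> Cfun X" if "\<phi> \<in> Cfun Z" for \<phi>
    using that by (blast intro: Cfun_restrict)
  have "?g (const_fun Z c) = const_fun X c" for c
    using maxmin_measuresD(2)[OF sM] by (auto simp: const_fun_def)
  moreover have "?g (max_fun Z \<phi> \<psi>) = max_fun X (?g \<phi>) (?g \<psi>)"
    if "\<phi> \<in> Cfun Z" "\<psi> \<in> Cfun Z" for \<phi> \<psi>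
    using maxmin_measuresD(3)[OF sM] that by (auto simp: max_fun_def)
  moreover have "?g (min_const Z c \<phi>) = min_const X c (?g \<phi>)" if "\<phi> \<in> Cfun Z" for c \<phi>
    using maxmin_measuresD(4)[OF sM] that by (auto simp: min_const_def)
  ultimately show ?thesis
    using maxmin_measuresD[OF \<nu>] gC
    by (simp add: maxmin_measures_def maxmin_average_def const_fun_Cfun max_fun_Cfun
        min_const_Cfun)
qed

lemma Jmap_maxmin_average:
  assumes f: "continuous_map Z X f" and \<nu>: "\<nu> \<in> maxmin_measures X"
    and s: "\<And>x \<phi>. x \<in> topspace X \<Longrightarrow> \<phi> \<in> Cfun X \<Longrightarrow> s x (restrict (\<phi> \<circ> f) (topspace Z)) = \<phi> x"
  shows "Jmap Z X f (maxmin_average X Z s \<nu>) = \<nu>"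
proof
  fix \<phi>
  show "Jmap Z X f (maxmin_average X Z s \<nu>) \<phi> = \<nu> \<phi>"
  proof (cases "\<phi> \<in> Cfun X")
    case True
    then have "restrict (\<lambda>x. s x (restrict (\<phi> \<circ> f) (topspace Z))) (topspace X) = \<phi>"
      using s Cfun_restrict_eq[OF True] by (metis (no_types, lifting) restrict_ext)
    then show ?thesis
      using True Cfun_comp[OF True f] by (simp add: Jmap_def maxmin_average_def)
  next
    case False
    then show ?thesis
      using maxmin_measuresD(1)[OF \<nu>] by (simp add: Jmap_def extensional_def)
  qed
qed

theorem mainTheorem8:
  fixes Z :: "'a topology" and X :: "'b topology" and f :: "'a \<Rightarrow> 'b"
  assumes "compact_space Z" "Hausdorff_space Z"
    and "compact_space X" "Hausdorff_space X"
    and "maxmin_Milyutin Z X f"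
  shows "Jmap Z X f ` maxmin_measures Z = maxmin_measures X"
proof
  obtain s where f: "continuous_map Z X f" and s: "continuous_map X (Jtop Z) s"
    and fibre: "\<And>x. x \<in> topspace X \<Longrightarrow> s x \<in> J_sub Z {z \<in> topspace Z. f z = x}"
    using assms(5) by (auto simp: maxmin_Milyutin_def)
  then show "Jmap Z X f ` maxmin_measures Z \<subseteq> maxmin_measures X"
    by (auto intro: Jmap_in_maxmin_measures)
  show "maxmin_measures X \<subseteq> Jmap Z X f ` maxmin_measures Z"
  proof
    fix \<nu> assume \<nu>: "\<nu> \<in> maxmin_measures X"
    have "s x (restrict (\<phi> \<circ> f) (topspace Z)) = \<phi> x"
      if "x \<in> topspace X" "\<phi> \<in> Cfun X" for x \<phi>
      using fibre[OF that(1)] Cfun_comp[OF that(2) f] by (rule J_sub_const_on) simp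
    then have "Jmap Z X f (maxmin_average X Z s \<nu>) = \<nu>"
      by (rule Jmap_maxmin_average[OF f \<nu>])
    then show "\<nu> \<in> Jmap Z X f ` maxmin_measures Z"
      using maxmin_average_in_maxmin_measures[OF s \<nu>] by (metis image_eqI)
  qed
qed

end
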